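(* Fix all system parameters except the RIS reflection vector $\boldsymbol{\omega}\in\mathbb{C}^{N_\mathrm{r}}$, and write $\mathbf{J}_{\boldsymbol{\gamma}}(\boldsymbol{\omega})$ for the Fisher information matrix defined in the context. Then $\mathbf{J}_{\boldsymbol{\gamma}}(\boldsymbol{\omega})$ depends on $\boldsymbol{\omega}$ only through the three scalars $\mathbf{B}^\mathrm{H}\boldsymbol{\omega}=\big[\mathbf{b}_\mathrm{r}^\mathrm{T}(\boldsymbol{\phi}_\mathrm{ru})\boldsymbol{\omega},\ \tfrac{\partial \mathbf{b}_\mathrm{r}^\mathrm{T}(\boldsymbol{\phi}_\mathrm{ru})}{\partial\phi_\mathrm{ru}^{\mathrm{az}}}\boldsymbol{\omega},\ \tfrac{\partial \mathbf{b}_\mathrm{r}^\mathrm{T}(\boldsymbol{\phi}_\mathrm{ru})}{\partial\phi_\mathrm{ru}^{\mathrm{el}}}\boldsymbol{\omega}\big]^\mathrm{T}$. In particular, it does not depend on the component $\boldsymbol{\Pi}_\mathbf{B}^\perp\boldsymbol{\omega}$: if $\boldsymbol{\Pi}_\mathbf{B}\boldsymbol{\omega}_1=\boldsymbol{\Pi}_\mathbf{B}\boldsymbol{\omega}_2$, then $\mathbf{J}_{\boldsymbol{\gamma}}(\boldsymbol{\omega}_1)=\mathbf{J}_{\boldsymbol{\gamma}}(\boldsymbol{\omega}_2)$, and consequently $\mathbf{J}_{\boldsymbol{\eta}}(\boldsymbol{\omega}_1)=\mathbf{J}_{\boldsymbol{\eta}}(\boldsymbol{\omega}_2)$.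
   Context: Setting: a LEO satellite with a uniform planar array of $N_\mathrm{s}$ antennas, whose element coordinates in its body frame are the columns of $\mathbf{P}_\mathrm{s}\in\mathbb{R}^{3\times N_\mathrm{s}}$. An RIS with $N_\mathrm{r}$ elements, whose coordinates in its body frame are the columns of $\mathbf{P}_\mathrm{r}\in\mathbb{R}^{3\times N_\mathrm{r}}$. A single-antenna UE. For an angle pair $\boldsymbol{\theta}=[\theta^{\mathrm{az}},\theta^{\mathrm{el}}]^\mathrm{T}$, let $\mathbf{t}(\boldsymbol{\theta})=[\cos\theta^{\mathrm{az}}\cos\theta^{\mathrm{el}},\ \sin\theta^{\mathrm{az}}\cos\theta^{\mathrm{el}},\ \sin\theta^{\mathrm{el}}]^\mathrm{T}$. The steering vectors are $\mathbf{a}_\mathrm{s}(\boldsymbol{\theta})=\exp(-j\tfrac{2\pi f_c}{c}\mathbf{P}_\mathrm{s}^\mathrm{T}\mathbf{t}(\boldsymbol{\theta}))$ and $\mathbf{a}_\mathrm{r}(\boldsymbol{\phi})=\exp(-j\tfrac{2\pi f_c}{c}\mathbf{P}_\mathrm{r}^\mathrm{T}\mathbf{t}(\boldsymbol{\phi}))$, with the exponential applied entrywise, where $f_c$ is the carrier frequency and $c$ is the speed of light. The RIS reflection vector is $\boldsymbol{\omega}\in\mathbb{C}^{N_\mathrm{r}}$. The channel at time $t$ and frequency $f$ is the row vector $\mathbf{h}^\mathrm{T}(t,f)=\alpha_\mathrm{su}e^{j2\pi(t\nu_\mathrm{su}-f\tau_\mathrm{su})}\mathbf{a}_\mathrm{s}^\mathrm{T}(\boldsymbol{\theta}_\mathrm{su})+\alpha_\mathrm{sru}e^{j2\pi(t\nu_\mathrm{sr}-f\tau_\mathrm{sru})}\mathbf{a}_\mathrm{r}^\mathrm{T}(\boldsymbol{\phi}_\mathrm{ru})\,\mathrm{diag}(\boldsymbol{\omega})\,\mathbf{a}_\mathrm{r}(\boldsymbol{\phi}_\mathrm{sr})\mathbf{a}_\mathrm{s}^\mathrm{T}(\boldsymbol{\theta}_\mathrm{sr}).$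 Here $\alpha_\mathrm{su},\alpha_\mathrm{sru}\in\mathbb{C}$ are gains, $\tau_\mathrm{su},\tau_\mathrm{sru}$ are delays, and $\nu_\mathrm{su},\nu_\mathrm{sr}$ are Doppler shifts. The angle pairs are $\boldsymbol{\theta}_\mathrm{su},\boldsymbol{\theta}_\mathrm{sr}$ (angles of departure at the satellite), $\boldsymbol{\phi}_\mathrm{sr}$ (angle of arrival at the RIS) and $\boldsymbol{\phi}_\mathrm{ru}$ (angle of departure from the RIS toward the UE). The quantities $\boldsymbol{\theta}_\mathrm{sr},\boldsymbol{\phi}_\mathrm{sr},\nu_\mathrm{sr}$ are known. Observations: $M$ transmissions with period $T$, and $N$ subcarriers with spacing $\Delta f$. The noise-free received sample is $\mu_m[n]=\sqrt{P}\,\mathbf{h}^\mathrm{T}(mT,n\Delta f)\mathbf{f}_m s_m[n]$, where $P>0$ is the power, $\mathbf{f}_m\in\mathbb{C}^{N_\mathrm{s}}$ are known precoders, and $s_m[n]$ are known pilot symbols. The noise is i.i.d. $\mathcal{CN}(0,\sigma^2)$. Channel parameter vector: $\boldsymbol{\gamma}=[\tau_\mathrm{su},\theta_\mathrm{su}^{\mathrm{az}},\theta_\mathrm{su}^{\mathrm{el}},\tau_\mathrm{sru},\phi_\mathrm{ru}^{\mathrm{az}},\phi_\mathrm{ru}^{\mathrm{el}},\nu_\mathrm{su},\Re\alpha_\mathrm{su},\Im\alpha_\mathrm{su},\Re\alpha_\mathrm{sru},\Im\alpha_\mathrm{sru}]^\mathrm{T}\in\mathbb{R}^{11}.$ Its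 Fisher information matrix is $\mathbf{J}_{\boldsymbol{\gamma}}=\frac{2}{\sigma^2}\sum_{m=1}^M\sum_{n=1}^N\Re\Big\{\frac{\partial\mu_m[n]}{\partial\boldsymbol{\gamma}}\Big(\frac{\partial\mu_m[n]}{\partial\boldsymbol{\gamma}}\Big)^\mathrm{H}\Big\}.$ Location parameter vector: $\boldsymbol{\eta}=[\mathbf{p}_\mathrm{u}^\mathrm{T},\Delta,\Re\alpha_\mathrm{su},\Im\alpha_\mathrm{su},\Re\alpha_\mathrm{sru},\Im\alpha_\mathrm{sru}]^\mathrm{T}\in\mathbb{R}^8$, where $\mathbf{p}_\mathrm{u}$ is the UE position and $\Delta$ is a clock offset. The vector $\boldsymbol{\gamma}$ is a smooth function of $\boldsymbol{\eta}$ given the known satellite position $\mathbf{p}_\mathrm{s}$, satellite velocity $\boldsymbol{v}$, RIS position $\mathbf{p}_\mathrm{r}$, and the known orientations. Specifically: - $\tau_\mathrm{su}=\|\mathbf{p}_\mathrm{s}-\mathbf{p}_\mathrm{u}\|/c+\Delta$; - $\tau_\mathrm{sru}=(\|\mathbf{p}_\mathrm{s}-\mathbf{p}_\mathrm{r}\|+\|\mathbf{p}_\mathrm{r}-\mathbf{p}_\mathrm{u}\|)/c+\Delta$; - $\nu_\mathrm{su}=\boldsymbol{v}^\mathrm{T}(\mathbf{p}_\mathrm{u}-\mathbf{p}_\mathrm{s})/(\lambda\|\mathbf{p}_\mathrm{u}-\mathbf{p}_\mathrm{s}\|)$, with $\lambda$ the wavelength; - $\boldsymbol{\theta}_\mathrm{su}$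 and $\boldsymbol{\phi}_\mathrm{ru}$ are the directions of $\mathbf{p}_\mathrm{u}$ as seen from the satellite and from the RIS in their respective body frames. With $\mathbf{T}=\partial\boldsymbol{\gamma}^\mathrm{T}/\partial\boldsymbol{\eta}\in\mathbb{R}^{8\times 11}$, which does not depend on $\boldsymbol{\omega}$, define $\mathbf{J}_{\boldsymbol{\eta}}=\mathbf{T}\mathbf{J}_{\boldsymbol{\gamma}}\mathbf{T}^\mathrm{T}$ and $\mathrm{PEB}=\sqrt{\mathrm{tr}([\mathbf{J}_{\boldsymbol{\eta}}^{-1}]_{1:3,1:3})}$. Further notation. Let $\mathbf{b}_\mathrm{r}(\boldsymbol{\phi})=\mathbf{a}_\mathrm{r}(\boldsymbol{\phi})\odot\mathbf{a}_\mathrm{r}(\boldsymbol{\phi}_\mathrm{sr})$, where $\odot$ is the Hadamard product. Let $\mathbf{B}=\big[\mathbf{b}_\mathrm{r}^*(\boldsymbol{\phi}_\mathrm{ru}),\ \tfrac{\partial\mathbf{b}_\mathrm{r}^*(\boldsymbol{\phi}_\mathrm{ru})}{\partial\phi_\mathrm{ru}^{\mathrm{az}}},\ \tfrac{\partial\mathbf{b}_\mathrm{r}^*(\boldsymbol{\phi}_\mathrm{ru})}{\partial\phi_\mathrm{ru}^{\mathrm{el}}}\big]\in\mathbb{C}^{N_\mathrm{r}\times 3}$, assumed to have full column rank. Let $\boldsymbol{\Pi}_\mathbf{B}=\mathbf{B}(\mathbf{B}^\mathrm{H}\mathbf{B})^{-1}\mathbf{B}^\mathrm{H}$ and $\boldsymbol{\Pi}_\mathbf{B}^\perp=\mathbf{I}-\boldsymbol{\Pi}_\mathbf{B}$.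 *)

theory Defs
  imports "HOL-Analysis.Analysis"
begin

definition tdir :: "real \<Rightarrow> real \<Rightarrow> real^3" where
  "tdir az el = vector [cos az * cos el, sin az * cos el, sin el]"

text \<open>Steering vector exp(-j 2 pi fc/c P^T t(theta)); P given by its columns
  (element coordinates in the body frame), one per antenna index.\<close>
definition steer :: "real \<Rightarrow> real \<Rightarrow> ('n::finite \<Rightarrow> real^3) \<Rightarrow> real \<Rightarrow> real \<Rightarrow> complex^'n" where
  "steer fc c P az el = (\<chi> i. exp (- \<i> * complex_of_real (2 * pi * fc / c * (P i \<bullet> tdir az el))))"

text \<open>Non-conjugating bilinear product x^T y.\<close>
definition tdot :: "complex^'n::finite \<Rightarrow> complex^'n \<Rightarrow> complex" where
  "tdot x y = (\<Sum>i\<in>UNIV. x $ i * y $ i)"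

definition hadamard :: "complex^'n::finite \<Rightarrow> complex^'n \<Rightarrow> complex^'n" where
  "hadamard x y = (\<chi> i. x $ i * y $ i)"

definition cconj :: "complex^'n::finite \<Rightarrow> complex^'n" where
  "cconj x = (\<chi> i. cnj (x $ i))"

definition herm :: "complex^'n::finite^'m::finite \<Rightarrow> complex^'m^'n" where
  "herm A = (\<chi> i j. cnj (A $ j $ i))"

record ('ns, 'nr) sys =
  fc :: real
  cl :: real               \<comment> \<open>speed of light\<close>
  Ps :: "'ns \<Rightarrow> real^3"
  Pr :: "'nr \<Rightarrow> real^3"
  th_sr_az :: real  th_sr_el :: real
  ph_sr_az :: real  ph_sr_el :: real
  nu_sr :: real
  Mtx :: nat
  Nsc :: nat
  Tper :: real
  df :: real
  Pow :: real
  prec :: "nat \<Rightarrow> complex^'ns"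
  pil :: "nat \<Rightarrow> nat \<Rightarrow> complex"
  sig2 :: real

definition a_s :: "('ns::finite, 'nr::finite, 'z) sys_scheme \<Rightarrow> real \<Rightarrow> real \<Rightarrow> complex^'ns" where
  "a_s S az el = steer (fc S) (cl S) (Ps S) az el"

definition a_r :: "('ns::finite, 'nr::finite, 'z) sys_scheme \<Rightarrow> real \<Rightarrow> real \<Rightarrow> complex^'nr" where
  "a_r S az el = steer (fc S) (cl S) (Pr S) az el"

section \<open>Channel parameter vector gamma (indices 1..11 of type 11; note 11 = 0 there)\<close>

text \<open>gamma = [tau_su, th_su_az, th_su_el, tau_sru, ph_ru_az, ph_ru_el, nu_su,
  Re a_su, Im a_su, Re a_sru, Im a_sru], stored at indices 1,...,11.\<close>

definition cdiag :: "complex^'n::finite \<Rightarrow> complex^'n^'n" where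
  "cdiag w = (\<chi> i j. if i = j then w $ i else 0)"

text \<open>The row vector h^T(t,f), stored as an element of complex^Ns.\<close>
definition channel :: "('ns::finite, 'nr::finite, 'z) sys_scheme \<Rightarrow> real^11 \<Rightarrow> complex^'nr
    \<Rightarrow> real \<Rightarrow> real \<Rightarrow> complex^'ns" where
  "channel S g w t f =
     (let tau_su = g $ 1; th_az = g $ 2; th_el = g $ 3; tau_sru = g $ 4;
          ph_az = g $ 5; ph_el = g $ 6; nu_su = g $ 7;
          alpha_su = Complex (g $ 8) (g $ 9); alpha_sru = Complex (g $ 10) (g $ 11)
      in (alpha_su * exp (\<i> * complex_of_real (2 * pi * (t * nu_su - f * tau_su))))
            *s a_s S th_az th_el
         + (alpha_sru * exp (\<i> * complex_of_real (2 * pi * (t * nu_sr S - f * tau_sru)))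
            * tdot (a_r S ph_az ph_el) (cdiag w *v a_r S (ph_sr_az S) (ph_sr_el S)))
            *s a_s S (th_sr_az S) (th_sr_el S))"

definition mu :: "('ns::finite, 'nr::finite, 'z) sys_scheme \<Rightarrow> real^11 \<Rightarrow> complex^'nr
    \<Rightarrow> nat \<Rightarrow> nat \<Rightarrow> complex" where
  "mu S g w m n = complex_of_real (sqrt (Pow S))
      * tdot (channel S g w (real m * Tper S) (real n * df S)) (prec S m) * pil S m n"

definition dmu :: "('ns::finite, 'nr::finite, 'z) sys_scheme \<Rightarrow> real^11 \<Rightarrow> complex^'nr
    \<Rightarrow> nat \<Rightarrow> nat \<Rightarrow> 11 \<Rightarrow> complex" where
  "dmu S g w m n k = vector_derivative (\<lambda>x::real. mu S (g + x *\<^sub>R axis k 1) w m n) (at 0)"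

definition Jgam :: "('ns::finite, 'nr::finite, 'z) sys_scheme \<Rightarrow> real^11 \<Rightarrow> complex^'nr
    \<Rightarrow> real^11^11" where
  "Jgam S g w = (\<chi> i j. 2 / sig2 S * (\<Sum>m = 1..Mtx S. \<Sum>n = 1..Nsc S.
        Re (dmu S g w m n i * cnj (dmu S g w m n j))))"

definition b_r :: "('ns::finite, 'nr::finite, 'z) sys_scheme \<Rightarrow> real \<Rightarrow> real \<Rightarrow> complex^'nr" where
  "b_r S az el = hadamard (a_r S az el) (a_r S (ph_sr_az S) (ph_sr_el S))"

definition Bmat :: "('ns::finite, 'nr::finite, 'z) sys_scheme \<Rightarrow> real^11 \<Rightarrow> complex^3^'nr" where
  "Bmat S g =
     (let az = g $ 5; el = g $ 6;
          c1 = cconj (b_r S az el);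
          c2 = vector_derivative (\<lambda>x. cconj (b_r S x el)) (at az);
          c3 = vector_derivative (\<lambda>x. cconj (b_r S az x)) (at el)
      in \<chi> i. vector [c1 $ i, c2 $ i, c3 $ i])"

definition full_col_rank :: "complex^'c::finite^'r::finite \<Rightarrow> bool" where
  "full_col_rank A \<longleftrightarrow> (\<forall>x. A *v x = 0 \<longrightarrow> x = 0)"

definition proj :: "complex^'c::finite^'r::finite \<Rightarrow> complex^'r^'r" where
  "proj A = A ** matrix_inv (herm A ** A) ** herm A"

record geom =
  p_sat :: "real^3"
  v_sat :: "real^3"
  p_ris :: "real^3"
  R_sat :: "real^3^3"   \<comment> \<open>satellite orientation: columns = body axes in global frame\<close>
  R_ris :: "real^3^3"

definition azim :: "real^3 \<Rightarrow> real" where "azim d = Arg (Complex (d $ 1) (d $ 2))"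
definition elev :: "real^3 \<Rightarrow> real" where "elev d = arcsin (d $ 3 / norm d)"

text \<open>eta = [p_u (1..3), Delta (4), Re a_su, Im a_su, Re a_sru, Im a_sru (5..8)].\<close>
definition gamma_of_eta :: "('ns::finite, 'nr::finite, 'z) sys_scheme \<Rightarrow> geom \<Rightarrow> real^8 \<Rightarrow> real^11" where
  "gamma_of_eta S G e =
     (let pu = vector [e $ 1, e $ 2, e $ 3] :: real^3; Delta = e $ 4;
          ps = p_sat G; pr = p_ris G; lam = cl S / fc S;
          ds = transpose (R_sat G) *v (pu - ps);
          dr = transpose (R_ris G) *v (pu - pr)
      in vector [norm (ps - pu) / cl S + Delta,
                 azim ds, elev ds,
                 (norm (ps - pr) + norm (pr - pu)) / cl S + Delta,
                 azim dr, elev dr,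
                 (v_sat G \<bullet> (pu - ps)) / (lam * norm (pu - ps)),
                 e $ 5, e $ 6, e $ 7, e $ 8])"

definition Tjac :: "('ns::finite, 'nr::finite, 'z) sys_scheme \<Rightarrow> geom \<Rightarrow> real^8 \<Rightarrow> real^11^8" where
  "Tjac S G e = (\<chi> i j. vector_derivative (\<lambda>x::real. gamma_of_eta S G (e + x *\<^sub>R axis i 1) $ j) (at 0))"

definition Jeta :: "('ns::finite, 'nr::finite, 'z) sys_scheme \<Rightarrow> geom \<Rightarrow> real^8 \<Rightarrow> complex^'nr
    \<Rightarrow> real^8^8" where
  "Jeta S G e w = Tjac S G e ** Jgam S (gamma_of_eta S G e) w ** transpose (Tjac S G e)"

end

theory Submission
  imports Defs
begin

text \<open>Every sample \<open>\<mu>\<^sub>m[n]\<close> is affine in \<open>\<omega>\<close>: two reflection vectors change it by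
  \<open>c(\<gamma>) \<cdot> b\<^sub>r\<^sup>T(\<phi>\<^sub>r\<^sub>u) (\<omega>\<^sub>1 - \<omega>\<^sub>2)\<close> with a factor \<open>c\<close> continuous in \<open>\<gamma>\<close>. The second factor
  depends on \<open>\<gamma>\<close> only through \<open>\<phi>\<^sub>r\<^sub>u\<close>, and \<open>B\<^sup>H (\<omega>\<^sub>1 - \<omega>\<^sub>2) = 0\<close> says precisely that it and its
  two partial derivatives vanish at \<open>\<gamma>\<close>. Hence every partial derivative of the difference
  vanishes, the gradients \<open>\<partial>\<mu>\<^sub>m[n]/\<partial>\<gamma>\<close> coincide, and so do the Fisher matrices. Since
  \<open>B\<^sup>H \<Pi>\<^sub>B = B\<^sup>H\<close>, equal projections \<open>\<Pi>\<^sub>B \<omega>\<close> give equal \<open>B\<^sup>H \<omega>\<close>, and \<open>J\<^sub>\<eta> = T J\<^sub>\<gamma> T\<^sup>T\<close>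
  with \<open>T\<close> independent of \<open>\<omega>\<close>.\<close>

lemma has_vector_derivative_vec_lambda:
  fixes f :: "real \<Rightarrow> 'n::finite \<Rightarrow> 'a::real_normed_vector"
  assumes "\<And>i. ((\<lambda>x. f x i) has_vector_derivative D i) (at a)"
  shows "((\<lambda>x. \<chi> i. f x i) has_vector_derivative (\<chi> i. D i)) (at a)"
proof -
  have "((\<lambda>y. ((f y i - f a i) - (y - a) *\<^sub>R D i) /\<^sub>R norm (y - a)) \<longlongrightarrow> 0) (at a)" for i
    using assms[of i] unfolding has_vector_derivative_def has_derivative_at_within by simp
  then have "((\<lambda>y. \<chi> i. ((f y i - f a i) - (y - a) *\<^sub>R D i) /\<^sub>R norm (y - a)) \<longlongrightarrow> (\<chi> i. 0)) (at a)"
    by (intro tendsto_vec_lambda)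
  moreover have "(\<lambda>y. \<chi> i. ((f y i - f a i) - (y - a) *\<^sub>R D i) /\<^sub>R norm (y - a)) =
     (\<lambda>y. (((\<chi> i. f y i) - (\<chi> i. f a i)) - (y - a) *\<^sub>R (\<chi> i. D i)) /\<^sub>R norm (y - a))"
    by (auto simp: vec_eq_iff)
  ultimately show ?thesis
    unfolding has_vector_derivative_def has_derivative_at_within
    by (auto simp: zero_vec_def intro: bounded_linear_scaleR_left)
qed

lemma has_vector_derivative_at_shift:
  assumes "(f has_vector_derivative D) (at (a + b))"
  shows "((\<lambda>x. f (a + x)) has_vector_derivative D) (at b)"
proof -
  have "((\<lambda>x. a + x) has_vector_derivative 1) (at b)"
    by (auto intro!: derivative_eq_intros)
  from vector_diff_chain_at[OF this, of f D] assms show ?thesis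
    by (simp add: o_def)
qed

text \<open>No differentiability of \<open>f\<close> is needed: both sides are \<open>SOME\<close> over the same set of
  derivatives, so they agree even as junk values.\<close>
lemma vector_derivative_add_zero:
  fixes f h :: "real \<Rightarrow> 'a::real_normed_vector"
  assumes "(h has_vector_derivative 0) (at a)"
  shows "vector_derivative (\<lambda>x. f x + h x) (at a) = vector_derivative f (at a)"
proof -
  have "((\<lambda>x. f x + h x) has_vector_derivative D) (at a) \<longleftrightarrow> (f has_vector_derivative D) (at a)" for D
  proof
    assume "((\<lambda>x. f x + h x) has_vector_derivative D) (at a)"
    from has_vector_derivative_diff[OF this assms] show "(f has_vector_derivative D) (at a)"
      by simp
  next
    assume "(f has_vector_derivative D) (at a)"
    from has_vector_derivative_add[OF this assms]
    show "((\<lambda>x. f x + h x) has_vector_derivative D) (at a)"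
      by simp
  qed
  then show ?thesis
    unfolding vector_derivative_def by simp
qed

lemma has_vector_derivative_mult_flat_zero:
  fixes c \<phi> :: "real \<Rightarrow> complex"
  assumes "isCont c a" "\<phi> a = 0" "(\<phi> has_vector_derivative 0) (at a)"
  shows "((\<lambda>x. c x * \<phi> x) has_vector_derivative 0) (at a)"
proof -
  have \<phi>: "((\<lambda>y. norm (\<phi> y - \<phi> a - (y - a) *\<^sub>R 0) / norm (y - a)) \<longlongrightarrow> 0) (at a)"
    using assms(3) unfolding has_vector_derivative_def has_derivative_iff_norm by simp
  have c: "((\<lambda>y. norm (c y)) \<longlongrightarrow> norm (c a)) (at a)"
    using assms(1) by (intro tendsto_intros) (simp add: isCont_def)
  have "((\<lambda>y. norm (c y) * (norm (\<phi> y - \<phi> a - (y - a) *\<^sub>R 0) / norm (y - a)))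
          \<longlongrightarrow> norm (c a) * 0) (at a)"
    by (rule tendsto_mult[OF c \<phi>])
  moreover have "(\<lambda>y. norm (c y) * (norm (\<phi> y - \<phi> a - (y - a) *\<^sub>R 0) / norm (y - a))) =
      (\<lambda>y. norm (c y * \<phi> y - c a * \<phi> a - (y - a) *\<^sub>R 0) / norm (y - a))"
    using assms(2) by (auto simp: norm_mult)
  ultimately show ?thesis
    unfolding has_vector_derivative_def has_derivative_iff_norm
    by (auto intro: bounded_linear_scaleR_left)
qed

lemma exp_minus_ii_differentiable:
  assumes "(h has_real_derivative h') (at a)"
  shows "(\<lambda>x. exp (- \<i> * complex_of_real (h x))) differentiable (at a)"
proof -
  have "((\<lambda>x. - \<i> * complex_of_real (h x)) has_vector_derivative (- \<i> * complex_of_real h')) (at a)"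
    using assms by (intro derivative_intros)
  from field_vector_diff_chain_at[OF this DERIV_exp] show ?thesis
    by (auto simp: o_def intro: differentiableI_vector)
qed

lemma vector_derivative_cconj_nth:
  assumes "\<And>i. (\<lambda>x. F x $ i) differentiable (at a)"
  shows "vector_derivative (\<lambda>x. cconj (F x)) (at a) $ i = cnj (vector_derivative (\<lambda>x. F x $ i) (at a))"
proof -
  have "((\<lambda>x. \<chi> i. cnj (F x $ i)) has_vector_derivative
          (\<chi> i. cnj (vector_derivative (\<lambda>x. F x $ i) (at a)))) (at a)"
    using assms by (intro has_vector_derivative_vec_lambda has_vector_derivative_cnj)
      (simp add: vector_derivative_works)
  then show ?thesis
    unfolding cconj_def by (simp add: vector_derivative_at)
qed

lemma tdot_add_left: "tdot (x + y) p = tdot x p + tdot y p"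
  by (simp add: tdot_def sum.distrib distrib_right)

lemma tdot_scale_left: "tdot (c *s x) p = c * tdot x p"
  by (simp add: tdot_def sum_distrib_left mult.assoc)

lemma tdot_diff_right: "tdot x (p - q) = tdot x p - tdot x q"
  by (simp add: tdot_def sum_subtractf right_diff_distrib)

lemma tdot_cdiag: "tdot x (cdiag w *v y) = tdot (hadamard x y) w"
proof -
  have "cdiag w *v y = (\<chi> i. w $ i * y $ i)"
    by (simp add: cdiag_def matrix_vector_mult_def vec_eq_iff if_distrib[of "\<lambda>x. x * _"] cong: if_cong)
  then show ?thesis
    by (simp add: tdot_def hadamard_def mult_ac)
qed

lemma cconj_nth: "cconj x $ i = cnj (x $ i)"
  by (simp add: cconj_def)

lemma herm_mult_vec_nth: "(herm B *v d) $ j = (\<Sum>i\<in>UNIV. cnj (B $ i $ j) * d $ i)"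
  by (simp add: herm_def matrix_vector_mult_def)

lemma tdir_inner:
  "p \<bullet> tdir az el = p$1 * (cos az * cos el) + p$2 * (sin az * cos el) + p$3 * sin el"
  by (simp add: tdir_def inner_vec_def sum_3)

lemma steer_nth_differentiable_az: "(\<lambda>x. steer f c P x el $ i) differentiable (at az)"
  unfolding steer_def tdir_inner vec_lambda_beta
  by (rule exp_minus_ii_differentiable) (rule derivative_intros)+

lemma steer_nth_differentiable_el: "(\<lambda>x. steer f c P az x $ i) differentiable (at el)"
  unfolding steer_def tdir_inner vec_lambda_beta
  by (rule exp_minus_ii_differentiable) (rule derivative_intros)+

lemma b_r_nth_differentiable_az: "(\<lambda>x. b_r S x el $ i) differentiable (at az)"
  unfolding b_r_def hadamard_def a_r_def vec_lambda_beta
  by (intro differentiable_mult differentiable_const steer_nth_differentiable_az)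

lemma b_r_nth_differentiable_el: "(\<lambda>x. b_r S az x $ i) differentiable (at el)"
  unfolding b_r_def hadamard_def a_r_def vec_lambda_beta
  by (intro differentiable_mult differentiable_const steer_nth_differentiable_el)

lemma herm_Bmat_mult_vec:
  "(herm (Bmat S g) *v d) $ 1 = tdot (b_r S (g$5) (g$6)) d"
  "(herm (Bmat S g) *v d) $ 2 = (\<Sum>i\<in>UNIV. vector_derivative (\<lambda>x. b_r S x (g$6) $ i) (at (g$5)) * d $ i)"
  "(herm (Bmat S g) *v d) $ 3 = (\<Sum>i\<in>UNIV. vector_derivative (\<lambda>x. b_r S (g$5) x $ i) (at (g$6)) * d $ i)"
  by (simp_all add: herm_mult_vec_nth Bmat_def Let_def tdot_def cconj_nth
      vector_derivative_cconj_nth b_r_nth_differentiable_az b_r_nth_differentiable_el)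

lemma tdot_b_r_has_vector_derivative_az:
  "((\<lambda>x. tdot (b_r S (az + x) el) d) has_vector_derivative
      (\<Sum>i\<in>UNIV. vector_derivative (\<lambda>x. b_r S x el $ i) (at az) * d $ i)) (at 0)"
  unfolding tdot_def
  by (intro has_vector_derivative_sum has_vector_derivative_mult_left has_vector_derivative_at_shift)
    (simp add: vector_derivative_works[symmetric] b_r_nth_differentiable_az)

lemma tdot_b_r_has_vector_derivative_el:
  "((\<lambda>x. tdot (b_r S az (el + x)) d) has_vector_derivative
      (\<Sum>i\<in>UNIV. vector_derivative (\<lambda>x. b_r S az x $ i) (at el) * d $ i)) (at 0)"
  unfolding tdot_def
  by (intro has_vector_derivative_sum has_vector_derivative_mult_left has_vector_derivative_at_shift)
    (simp add: vector_derivative_works[symmetric] b_r_nth_differentiable_el)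

lemma tdot_b_r_along_axis_flat:
  assumes "herm (Bmat S g) *v d = 0"
  shows "((\<lambda>x. tdot (b_r S ((g + x *\<^sub>R axis k 1)$5) ((g + x *\<^sub>R axis k 1)$6)) d)
           has_vector_derivative 0) (at 0)"
proof -
  have zero: "(herm (Bmat S g) *v d) $ j = 0" for j
    using assms by simp
  consider "k = 5" | "k = 6" | "k \<noteq> 5" "k \<noteq> 6" by blast
  then show ?thesis
  proof cases
    case 1
    then show ?thesis
      using tdot_b_r_has_vector_derivative_az[of S "g$5" "g$6" d] zero[of 2]
      by (simp add: herm_Bmat_mult_vec axis_def add.commute)
  next
    case 2
    then show ?thesis
      using tdot_b_r_has_vector_derivative_el[of S "g$5" "g$6" d] zero[of 3]
      by (simp add: herm_Bmat_mult_vec axis_def add.commute)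
  next
    case 3
    then show ?thesis
      by (simp add: axis_def has_vector_derivative_const)
  qed
qed

text \<open>The factor multiplying \<open>b\<^sub>r\<^sup>T(\<phi>\<^sub>r\<^sub>u) \<omega>\<close> in \<open>\<mu>\<^sub>m[n]\<close>, the only place where \<open>\<omega>\<close> enters.\<close>
definition cascade_coeff :: "('ns::finite, 'nr::finite, 'z) sys_scheme \<Rightarrow> real^11 \<Rightarrow> nat \<Rightarrow> nat \<Rightarrow> complex"
  where "cascade_coeff S g m n = complex_of_real (sqrt (Pow S)) *
     (Complex (g$10) (g$11) *
        exp (\<i> * complex_of_real (2 * pi * (real m * Tper S * nu_sr S - real n * df S * g$4))))
     * tdot (a_s S (th_sr_az S) (th_sr_el S)) (prec S m) * pil S m n"

lemma mu_diff:
  "mu S g w1 m n - mu S g w2 m n = cascade_coeff S g m n * tdot (b_r S (g$5) (g$6)) (w1 - w2)"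
  by (simp add: mu_def channel_def Let_def cascade_coeff_def b_r_def a_r_def
      tdot_add_left tdot_scale_left tdot_cdiag tdot_diff_right algebra_simps)

lemma isCont_cascade_coeff: "isCont (\<lambda>x. cascade_coeff S (g + x *\<^sub>R v) m n) a"
  unfolding cascade_coeff_def Complex_eq by (intro continuous_intros)

lemma dmu_eq_if_herm_Bmat_eq:
  assumes "herm (Bmat S g) *v w1 = herm (Bmat S g) *v w2"
  shows "dmu S g w1 m n k = dmu S g w2 m n k"
proof -
  define v :: "real^11" where "v = axis k 1"
  define \<phi> where "\<phi> x = tdot (b_r S ((g + x *\<^sub>R v)$5) ((g + x *\<^sub>R v)$6)) (w1 - w2)" for x
  have kernel: "herm (Bmat S g) *v (w1 - w2) = 0"
    using assms by (simp add: matrix_vector_mult_diff_distrib)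
  have "\<phi> 0 = 0"
    using kernel herm_Bmat_mult_vec(1)[of S g "w1 - w2"] by (simp add: \<phi>_def)
  moreover have "(\<phi> has_vector_derivative 0) (at 0)"
    unfolding \<phi>_def v_def by (rule tdot_b_r_along_axis_flat[OF kernel])
  ultimately have flat: "((\<lambda>x. cascade_coeff S (g + x *\<^sub>R v) m n * \<phi> x) has_vector_derivative 0) (at 0)"
    by (intro has_vector_derivative_mult_flat_zero isCont_cascade_coeff)
  have "(\<lambda>x. mu S (g + x *\<^sub>R v) w1 m n) =
        (\<lambda>x. mu S (g + x *\<^sub>R v) w2 m n + cascade_coeff S (g + x *\<^sub>R v) m n * \<phi> x)"
    using mu_diff[of S _ w1 m n w2] by (auto simp: \<phi>_def algebra_simps)
  then show ?thesis
    unfolding dmu_def v_def[symmetric] by (simp add: vector_derivative_add_zero[OF flat])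
qed

lemma Jgam_eq_if_herm_Bmat_eq:
  assumes "herm (Bmat S g) *v w1 = herm (Bmat S g) *v w2"
  shows "Jgam S g w1 = Jgam S g w2"
  unfolding Jgam_def using dmu_eq_if_herm_Bmat_eq[OF assms] by simp

lemma herm_mult_quadratic_form:
  fixes B :: "complex^'c::finite^'r::finite"
  shows "(\<Sum>j\<in>UNIV. cnj (x$j) * (herm B *v (B *v x))$j) =
         complex_of_real (\<Sum>i\<in>UNIV. (cmod ((B *v x)$i))\<^sup>2)"
proof -
  have "(\<Sum>j\<in>UNIV. cnj (x$j) * (herm B *v (B *v x))$j) =
        (\<Sum>j\<in>UNIV. \<Sum>i\<in>UNIV. cnj (x$j) * cnj (B$i$j) * (B *v x)$i)"
    by (simp add: herm_mult_vec_nth sum_distrib_left mult.assoc)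
  also have "\<dots> = (\<Sum>i\<in>UNIV. \<Sum>j\<in>UNIV. cnj (x$j) * cnj (B$i$j) * (B *v x)$i)"
    by (rule sum.swap)
  also have "\<dots> = (\<Sum>i\<in>UNIV. (B *v x)$i * cnj ((B *v x)$i))"
    by (simp add: matrix_vector_mult_def cnj_sum sum_distrib_left sum_distrib_right mult_ac)
  also have "\<dots> = complex_of_real (\<Sum>i\<in>UNIV. (cmod ((B *v x)$i))\<^sup>2)"
    unfolding of_real_sum complex_norm_square ..
  finally show ?thesis .
qed

lemma gram_mult_eq_zero_imp:
  fixes B :: "complex^'c::finite^'r::finite"
  assumes "full_col_rank B" "(herm B ** B) *v x = 0"
  shows "x = 0"
proof -
  have "(\<Sum>i\<in>UNIV. (cmod ((B *v x)$i))\<^sup>2) = 0"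
    using assms(2) herm_mult_quadratic_form[of x B]
    by (simp add: matrix_vector_mul_assoc del: of_real_sum)
  then have "B *v x = 0"
    by (simp add: sum_nonneg_eq_0_iff vec_eq_iff)
  then show ?thesis
    using assms(1) by (simp add: full_col_rank_def)
qed

lemma herm_mult_proj:
  fixes B :: "complex^'c::finite^'r::finite"
  assumes "full_col_rank B"
  shows "herm B ** proj B = herm B"
proof -
  let ?M = "herm B ** B"
  have "invertible ?M"
    unfolding invertible_left_inverse matrix_left_invertible_ker
    using gram_mult_eq_zero_imp[OF assms] by blast
  then have "?M ** matrix_inv ?M = mat 1"
    unfolding invertible_def matrix_inv_def by (rule someI_ex[THEN conjunct1])
  then show ?thesis
    unfolding proj_def by (simp add: matrix_mul_assoc)
qed

lemma herm_mult_eq_if_proj_mult_eq: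
  fixes B :: "complex^'c::finite^'r::finite"
  assumes "full_col_rank B" "proj B *v w1 = proj B *v w2"
  shows "herm B *v w1 = herm B *v w2"
  by (metis assms herm_mult_proj matrix_vector_mul_assoc)

theorem mainTheorem1:
  fixes S :: "('ns::finite, 'nr::finite) sys" and G :: geom
    and g :: "real^11" and e :: "real^8"
  assumes "Pow S > 0" and "sig2 S > 0"
    and "full_col_rank (Bmat S g)"
    and "full_col_rank (Bmat S (gamma_of_eta S G e))"
  shows "(\<forall>w1 w2. herm (Bmat S g) *v w1 = herm (Bmat S g) *v w2
                  \<longrightarrow> Jgam S g w1 = Jgam S g w2)
       \<and> (\<forall>w1 w2. proj (Bmat S g) *v w1 = proj (Bmat S g) *v w2
                  \<longrightarrow> Jgam S g w1 = Jgam S g w2)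
       \<and> (\<forall>w1 w2. proj (Bmat S (gamma_of_eta S G e)) *v w1 = proj (Bmat S (gamma_of_eta S G e)) *v w2
                  \<longrightarrow> Jeta S G e w1 = Jeta S G e w2)"
proof (intro conjI allI impI)
  fix w1 w2
  assume "herm (Bmat S g) *v w1 = herm (Bmat S g) *v w2"
  then show "Jgam S g w1 = Jgam S g w2"
    by (rule Jgam_eq_if_herm_Bmat_eq)
next
  fix w1 w2
  assume "proj (Bmat S g) *v w1 = proj (Bmat S g) *v w2"
  then show "Jgam S g w1 = Jgam S g w2"
    by (intro Jgam_eq_if_herm_Bmat_eq herm_mult_eq_if_proj_mult_eq assms(3))
next
  fix w1 w2
  assume "proj (Bmat S (gamma_of_eta S G e)) *v w1 = proj (Bmat S (gamma_of_eta S G e)) *v w2"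
  then have "Jgam S (gamma_of_eta S G e) w1 = Jgam S (gamma_of_eta S G e) w2"
    by (intro Jgam_eq_if_herm_Bmat_eq herm_mult_eq_if_proj_mult_eq assms(4))
  then show "Jeta S G e w1 = Jeta S G e w2"
    by (simp add: Jeta_def)
qed

end
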